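(* Let $n\ge1$, $0\le a_1<a_1'\le a_2<a_2'\le\dots\le a_n<a_n'\le1$, $A_i=[a_i,a_i']$, $A=\bigcup_iA_i$, and let $\tau:[0,1]\to[0,1]$ be defined by $\tau x=\alpha_ix+c_i$ for $x\in A_i$ and $\tau x=x$ otherwise, where $\alpha_i>0$ and $\tau(A_i)\subseteq A_i$ for all $i$. Then for every finite signed Borel measure $\mu$ on $[0,1]$: $\|\tau^*\mu\|\le\bigl(n+1+\sum_i\frac1{\alpha_i}\bigr)\|\mu\|$ and $|\mu-\tau^*\mu|\le\frac12\bigl(n+2+\sum_i\frac1{\alpha_i}\bigr)m(A)\,\|\mu\|$.
   Context: $m$ is Lebesgue measure; $\tau^*\mu(B)=\mu(\tau^{-1}B)$. $\|\mu\|:=\sup\{\int\phi'\,d\mu:\phi\in C^1([0,1]),\sup|\phi|\le1\}$ (strong norm) and $|\mu|:=\sup\{\int\phi\,d\mu:\phi$ measurable, $\sup|\phi|\le1\}$ (weak/total variation norm). *)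

theory Defs
  imports "HOL-Analysis.Analysis"
begin

definition space01 :: "real measure" where
  "space01 = restrict_space borel {0..1}"

text \<open>A finite signed Borel measure on [0,1] is represented as a pair (P, N) of finite
  (nonnegative) Borel measures on [0,1], standing for P - N.  Every finite signed measure
  arises this way (Jordan decomposition), and all quantities below depend only on P - N.\<close>
definition signed_meas :: "real measure \<times> real measure \<Rightarrow> bool" where
  "signed_meas \<mu> \<longleftrightarrow> sets (fst \<mu>) = sets space01 \<and> sets (snd \<mu>) = sets space01
     \<and> finite_measure (fst \<mu>) \<and> finite_measure (snd \<mu>)"

definition sint :: "real measure \<times> real measure \<Rightarrow> (real \<Rightarrow> real) \<Rightarrow> real" where
  "sint \<mu> \<phi> = (\<integral>x. \<phi> x \<partial>fst \<mu>) - (\<integral>x. \<phi> x \<partial>snd \<mu>)"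

definition push :: "(real \<Rightarrow> real) \<Rightarrow> real measure \<times> real measure \<Rightarrow> real measure \<times> real measure" where
  "push \<tau> \<mu> = (distr (fst \<mu>) space01 \<tau>, distr (snd \<mu>) space01 \<tau>)"

definition C1_01 :: "(real \<Rightarrow> real) \<Rightarrow> (real \<Rightarrow> real) \<Rightarrow> bool" where
  "C1_01 \<phi> \<phi>' \<longleftrightarrow> (\<forall>x\<in>{0..1}. (\<phi> has_real_derivative \<phi>' x) (at x within {0..1}))
      \<and> continuous_on {0..1} \<phi>'"

definition strong_norm_fun :: "((real \<Rightarrow> real) \<Rightarrow> real) \<Rightarrow> ereal" where
  "strong_norm_fun I = Sup {ereal (I \<phi>') | \<phi> \<phi>'. C1_01 \<phi> \<phi>' \<and> (\<forall>x\<in>{0..1}. \<bar>\<phi> x\<bar> \<le> 1)}"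

definition weak_norm_fun :: "((real \<Rightarrow> real) \<Rightarrow> real) \<Rightarrow> ereal" where
  "weak_norm_fun I = Sup {ereal (I \<phi>) | \<phi>. \<phi> \<in> borel_measurable space01 \<and> (\<forall>x\<in>{0..1}. \<bar>\<phi> x\<bar> \<le> 1)}"

definition strong_norm :: "real measure \<times> real measure \<Rightarrow> ereal" where
  "strong_norm \<mu> = strong_norm_fun (sint \<mu>)"

definition weak_norm :: "real measure \<times> real measure \<Rightarrow> ereal" where
  "weak_norm \<mu> = weak_norm_fun (sint \<mu>)"

end

theory Submission
  imports Defs
begin

(* 1. Density bound (locale signed01, sint_bounded_bound): |int f dmu| <= K/2 int_0^1 |f|
      for bounded Borel f, proved along the chain continuous f (f = F', F centred) ->
      open sets -> Borel sets (outer regularity) -> step functions -> bounded f.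
   2. Geometry of tau (locale interval_map): for a C^1 test function phi with |phi| <= 1,
      prim phi is continuous, has derivative phi' o tau off the finitely many break points,
      and oscillates by at most 2 (n + 1 + sum 1/alpha_i).  Its window averages are C^1
      with the same oscillation, and their derivatives tend to phi' o tau in L^1.
   3. Both together (locale interval_map_signed): the strong estimate follows from the
      definition of the strong norm applied to window averages plus the density bound for
      the L^1 error; the weak estimate is the density bound for psi - psi o tau, which is
      bounded by 2 and vanishes off A. *)

lemma space_space01 [simp]: "space space01 = {0..1}"
  by (simp add: space01_def space_restrict_space)

lemma sets_space01_iff: "B \<in> sets space01 \<longleftrightarrow> B \<subseteq> {0..1} \<and> B \<in> sets borel"
  unfolding space01_def by (subst sets_restrict_space_iff) auto

lemma borel_measurable_space01I: "f \<in> borel_measurable borel \<Longrightarrow> f \<in> borel_measurable space01"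
  unfolding space01_def by (rule measurable_restrict_space1)

lemma space_eq_space01: "sets M = sets space01 \<Longrightarrow> space M = {0..1}"
  using sets_eq_imp_space_eq[of M space01] by simp

definition leb01 :: "real measure" where
  "leb01 = restrict_space lborel {0..1}"

lemma sets_leb01: "sets leb01 = sets space01"
  unfolding leb01_def space01_def by (simp add: sets_restrict_space)

lemma space_leb01 [simp]: "space leb01 = {0..1}"
  using space_eq_space01[OF sets_leb01] .

lemma finite_measure_leb01: "finite_measure leb01"
  unfolding leb01_def by (rule finite_measureI) (simp add: space_restrict_space emeasure_restrict_space)

lemma measure_leb01: "B \<subseteq> {0..1} \<Longrightarrow> measure leb01 B = measure lborel B"
  unfolding leb01_def by (rule measure_restrict_space) auto

lemma integral_leb01: "integral\<^sup>L leb01 f = (LINT x:{0..1}|lborel. f x)" for f :: "real \<Rightarrow> real"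
  unfolding leb01_def set_lebesgue_integral_def by (rule integral_restrict_space) auto

lemma oscillation_centre:
  fixes F :: "'a \<Rightarrow> real"
  assumes "S \<noteq> {}" and osc: "\<forall>x\<in>S. \<forall>y\<in>S. \<bar>F x - F y\<bar> \<le> L"
  shows "\<exists>c. \<forall>x\<in>S. \<bar>F x - c\<bar> \<le> L/2"
proof -
  obtain x0 where x0: "x0 \<in> S" using assms(1) by blast
  have above: "bdd_above (F ` S)" using osc x0
    by (intro bdd_aboveI[of _ "F x0 + L"]) (force simp: abs_le_iff)
  have below: "bdd_below (F ` S)" using osc x0
    by (intro bdd_belowI[of _ "F x0 - L"]) (force simp: abs_le_iff)
  define M where "M = Sup (F ` S)"
  define m where "m = Inf (F ` S)"
  have upper: "F x \<le> M" and lower: "m \<le> F x" if "x \<in> S" for x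
    using that above below unfolding M_def m_def by (simp_all add: cSup_upper cInf_lower)
  have "M \<le> F y + L" if "y \<in> S" for y
    unfolding M_def using assms(1) osc that by (intro cSup_least) (force simp: abs_le_iff)+
  then have spread: "M - L \<le> m"
    unfolding m_def using assms(1) by (intro cInf_greatest) force+
  have "\<bar>F x - (M + m)/2\<bar> \<le> L/2" if "x \<in> S" for x
    using upper[OF that] lower[OF that] spread by (auto simp: abs_le_iff field_simps)
  then show ?thesis by blast
qed

lemma outer_regular_space01:
  fixes M :: "real measure"
  assumes M: "finite_measure M" "sets M = sets space01" and B: "B \<in> sets space01" and e: "e > 0"
  shows "\<exists>U. open U \<and> B \<subseteq> U \<and> measure M (U \<inter> {0..1}) \<le> measure M B + e"
proof -
  interpret finite_measure M by (rule M(1))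
  have "(\<lambda>x::real. x) \<in> borel_measurable space01" by (rule borel_measurable_space01I) simp
  then have id_meas: "(\<lambda>x::real. x) \<in> borel_measurable M"
    using measurable_cong_sets[OF M(2) refl] by blast
  define M' where "M' = distr M borel (\<lambda>x. x)"
  have M'_eq: "emeasure M' A = emeasure M (A \<inter> {0..1})" if "A \<in> sets borel" for A
    unfolding M'_def using emeasure_distr[OF id_meas that] space_eq_space01[OF M(2)]
    by (simp add: Int_commute)
  have fin: "emeasure M' (space M') \<noteq> \<infinity>"
    using M'_eq[of UNIV] by (simp add: M'_def emeasure_eq_measure)
  have Bb: "B \<in> sets borel" and B01: "B \<subseteq> {0..1}" using B sets_space01_iff by auto
  have "emeasure M' B = (INF U \<in> {U. B \<subseteq> U \<and> open U}. emeasure M' U)"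
    by (rule outer_regular[OF _ fin Bb]) (simp add: M'_def)
  moreover have "emeasure M' B < ennreal (measure M B + e)"
    using M'_eq[OF Bb] B01 e by (simp add: Int_absorb2 emeasure_eq_measure ennreal_less_iff)
  ultimately obtain U where U: "B \<subseteq> U" "open U" "emeasure M' U < ennreal (measure M B + e)"
    by (auto simp: INF_less_iff)
  then have "measure M (U \<inter> {0..1}) < measure M B + e"
    using M'_eq[of U] by (simp add: borel_open emeasure_eq_measure ennreal_less_iff)
  with U show ?thesis by (intro exI[of _ U]) auto
qed

lemma finite_measure_bounded_convergence:
  fixes f :: "nat \<Rightarrow> 'a \<Rightarrow> real"
  assumes "finite_measure M" "\<And>k. f k \<in> borel_measurable M" "g \<in> borel_measurable M"
    and "\<And>k x. x \<in> space M \<Longrightarrow> \<bar>f k x\<bar> \<le> C" and "AE x in M. (\<lambda>k. f k x) \<longlonglongrightarrow> g x"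
  shows "(\<lambda>k. integral\<^sup>L M (f k)) \<longlonglongrightarrow> integral\<^sup>L M g"
proof (rule integral_dominated_convergence[where w="\<lambda>_. C"])
  show "integrable M (\<lambda>_. C)" using assms(1) by (rule finite_measure.integrable_const)
qed (use assms in auto)

lemma integral_close:
  fixes f g :: "'a \<Rightarrow> real"
  assumes M: "finite_measure M" and meas: "f \<in> borel_measurable M" "g \<in> borel_measurable M"
    and bdd: "\<And>x. x \<in> space M \<Longrightarrow> \<bar>f x\<bar> \<le> B" "\<And>x. x \<in> space M \<Longrightarrow> \<bar>g x\<bar> \<le> B"
    and close: "\<And>x. x \<in> space M \<Longrightarrow> \<bar>f x - g x\<bar> \<le> e"
  shows "\<bar>integral\<^sup>L M f - integral\<^sup>L M g\<bar> \<le> e * measure M (space M)"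
proof -
  interpret finite_measure M by (rule M)
  have "integrable M f" "integrable M g"
    using meas bdd by (auto intro!: integrable_const_bound[where B=B])
  then have "\<bar>integral\<^sup>L M f - integral\<^sup>L M g\<bar> = \<bar>integral\<^sup>L M (\<lambda>x. f x - g x)\<bar>"
    by simp
  also have "\<dots> \<le> integral\<^sup>L M (\<lambda>x. \<bar>f x - g x\<bar>)"
    using integral_norm_bound[of M "\<lambda>x. f x - g x"] by simp
  also have "\<dots> \<le> integral\<^sup>L M (\<lambda>_. e)"
    using \<open>integrable M f\<close> \<open>integrable M g\<close> close by (intro integral_mono) auto
  finally show ?thesis by (simp add: mult.commute)
qed

lemma floor_quantization_error:
  fixes q y :: real
  assumes q: "q \<ge> 1"
  shows "\<bar>y - \<lfloor>q * y\<rfloor> / q\<bar> \<le> 1/q"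
proof -
  have "y - \<lfloor>q * y\<rfloor> / q = (q * y - \<lfloor>q * y\<rfloor>) / q" using q by (simp add: field_simps)
  moreover have "0 \<le> q * y - \<lfloor>q * y\<rfloor>" "q * y - \<lfloor>q * y\<rfloor> \<le> 1" by linarith+
  ultimately show ?thesis using q by (simp add: abs_divide divide_right_mono)
qed

lemma abs_sum_disjoint_indicator:
  fixes c :: "'j \<Rightarrow> real"
  assumes J: "finite J" and disj: "disjoint_family_on E J"
  shows "\<bar>\<Sum>j\<in>J. c j * indicator (E j) x\<bar> = (\<Sum>j\<in>J. \<bar>c j\<bar> * indicator (E j) x)"
proof (cases "\<exists>j\<in>J. x \<in> E j")
  case True
  then obtain j where j: "j \<in> J" "x \<in> E j" by blast
  have "x \<notin> E i" if "i \<in> J" "i \<noteq> j" for i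
    using disj j that unfolding disjoint_family_on_def by blast
  then have single: "(\<Sum>i\<in>J. h i * indicator (E i) x) = h j" for h :: "'j \<Rightarrow> real"
    using j by (subst sum.remove[OF J j(1)]) (auto intro!: sum.neutral)
  show ?thesis by (simp only: single)
qed (auto intro!: sum.neutral)

lemma integral_step_function:
  fixes c :: "'j \<Rightarrow> real"
  assumes J: "finite J" and g: "\<And>x. x \<in> space M \<Longrightarrow> g x = (\<Sum>j\<in>J. c j * indicator (E j) x)"
    and E: "\<And>j. j \<in> J \<Longrightarrow> E j \<in> sets M" "\<And>j. j \<in> J \<Longrightarrow> emeasure M (E j) < \<infinity>"
  shows "integral\<^sup>L M g = (\<Sum>j\<in>J. c j * measure M (E j))"
proof -
  have "integral\<^sup>L M g = integral\<^sup>L M (\<lambda>x. \<Sum>j\<in>J. c j * indicator (E j) x)"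
    by (rule Bochner_Integration.integral_cong[OF refl]) (simp add: g)
  also have "\<dots> = (\<Sum>j\<in>J. integral\<^sup>L M (\<lambda>x. c j * indicator (E j) x))"
    by (rule Bochner_Integration.integral_sum) (use E in \<open>auto intro!: integrable_mult_right\<close>)
  also have "\<dots> = (\<Sum>j\<in>J. c j * measure M (E j))"
    using E(1) sets.sets_into_space by (auto simp: Int_absorb2 intro!: sum.cong)
  finally show ?thesis .
qed

text \<open>The strong norm is never negative: the zero function is an admissible test function.\<close>

lemma C1_01_const: "C1_01 (\<lambda>_. c) (\<lambda>_. 0)"
  unfolding C1_01_def by auto

lemma strong_norm_nonneg: "0 \<le> strong_norm \<mu>"
proof -
  have "ereal (sint \<mu> (\<lambda>_. 0)) \<le> strong_norm \<mu>"
    unfolding strong_norm_def strong_norm_fun_def using C1_01_const[of 0] by (intro Sup_upper) force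
  then show ?thesis by (simp add: sint_def zero_ereal_def)
qed

lemma C1_01_continuous: "C1_01 \<phi> \<phi>' \<Longrightarrow> continuous_on {0..1} \<phi>"
  unfolding C1_01_def continuous_on_eq_continuous_within using DERIV_continuous by blast

lemma C1_01_deriv_interior:
  assumes "C1_01 \<phi> \<phi>'" and "u \<in> {0<..<1}"
  shows "(\<phi> has_real_derivative \<phi>' u) (at u)"
proof -
  have "(\<phi> has_real_derivative \<phi>' u) (at u within {0..1})"
    using assms unfolding C1_01_def by auto
  moreover have "at u within {0..1} = at u" using assms(2) by (intro at_within_interior) simp
  ultimately show ?thesis by simp
qed

lemma C1_01_deriv_measurable: "C1_01 \<phi> \<phi>' \<Longrightarrow> \<phi>' \<in> borel_measurable space01"
  unfolding space01_def C1_01_def by (intro borel_measurable_continuous_on_restrict) auto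

lemma C1_01_deriv_bounded:
  assumes "C1_01 \<phi> \<phi>'"
  obtains M where "M \<ge> 0" "\<And>u. u \<in> {0..1} \<Longrightarrow> \<bar>\<phi>' u\<bar> \<le> M"
proof -
  have "compact (\<phi>' ` {0..1})" using assms unfolding C1_01_def by (intro compact_continuous_image) auto
  then obtain M where "M > 0" "\<forall>y\<in>\<phi>' ` {0..1}. norm y \<le> M" using compact_imp_bounded bounded_pos by blast
  then show ?thesis using that[of M] by auto
qed

lemma open_indicator_approx:
  fixes V :: "'a::metric_space set"
  assumes V: "open V" "V \<noteq> UNIV"
  obtains f :: "nat \<Rightarrow> 'a \<Rightarrow> real"
  where "\<And>k. continuous_on UNIV (f k)" "\<And>k x. 0 \<le> f k x \<and> f k x \<le> 1"
    "\<And>x. (\<lambda>k. f k x) \<longlonglongrightarrow> indicator V x"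
proof
  define f where "f k x = min 1 (real k * infdist x (- V))" for k x
  show "continuous_on UNIV (f k)" for k unfolding f_def by (intro continuous_intros)
  show "0 \<le> f k x \<and> f k x \<le> 1" for k x unfolding f_def by (auto simp: infdist_nonneg)
  show "(\<lambda>k. f k x) \<longlonglongrightarrow> indicator V x" for x
  proof (cases "x \<in> V")
    case True
    then have d: "infdist x (- V) > 0"
      using V by (intro infdist_pos_not_in_closed) (auto simp: closed_Compl)
    obtain k0 :: nat where k0: "real k0 > 1 / infdist x (- V)" using reals_Archimedean2 by blast
    have "f k x = 1" if "k \<ge> k0" for k
    proof -
      have "1 < real k0 * infdist x (- V)" using k0 d by (simp add: divide_less_eq)
      also have "\<dots> \<le> real k * infdist x (- V)" using that d by (intro mult_right_mono) auto
      finally show ?thesis unfolding f_def by simp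
    qed
    then have "eventually (\<lambda>k. f k x = 1) sequentially" by (auto simp: eventually_sequentially)
    then show ?thesis using True by (simp add: tendsto_eventually)
  next
    case False
    then show ?thesis by (simp add: f_def)
  qed
qed

locale signed01 =
  fixes P N :: "real measure" and K :: real
  assumes sets_P: "sets P = sets space01" and sets_N: "sets N = sets space01"
    and finite_P: "finite_measure P" and finite_N: "finite_measure N"
    and strong_norm_PN: "strong_norm (P, N) = ereal K"
begin

lemma space_P [simp]: "space P = {0..1}" and space_N [simp]: "space N = {0..1}"
  using space_eq_space01[OF sets_P] space_eq_space01[OF sets_N] by simp_all

lemma K_nonneg: "0 \<le> K"
  using strong_norm_nonneg[of "(P, N)"] strong_norm_PN by simp

lemma measurable_PN:
  assumes "f \<in> borel_measurable space01"
  shows "f \<in> borel_measurable P" "f \<in> borel_measurable N"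
  using assms measurable_cong_sets[OF sets_P refl] measurable_cong_sets[OF sets_N refl] by auto

lemma integrable_PN:
  fixes f :: "real \<Rightarrow> real"
  assumes "f \<in> borel_measurable space01" and "\<And>x. x \<in> {0..1} \<Longrightarrow> \<bar>f x\<bar> \<le> B"
  shows "integrable P f" "integrable N f"
  using assms measurable_PN[OF assms(1)]
  by (auto intro!: finite_measure.integrable_const_bound[where B=B] finite_P finite_N)

lemma sint_diff:
  fixes f g :: "real \<Rightarrow> real"
  assumes "f \<in> borel_measurable space01" "\<And>x. x \<in> {0..1} \<Longrightarrow> \<bar>f x\<bar> \<le> B"
    and "g \<in> borel_measurable space01" "\<And>x. x \<in> {0..1} \<Longrightarrow> \<bar>g x\<bar> \<le> B"
  shows "sint (P, N) (\<lambda>x. f x - g x) = sint (P, N) f - sint (P, N) g"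
  using integrable_PN[OF assms(1,2)] integrable_PN[OF assms(3,4)]
  by (simp add: sint_def Bochner_Integration.integral_diff)

lemma sint_push:
  assumes \<tau>: "\<tau> \<in> measurable space01 space01" and f: "f \<in> borel_measurable space01"
  shows "sint (push \<tau> (P, N)) f = sint (P, N) (\<lambda>x. f (\<tau> x))"
proof -
  have "\<tau> \<in> measurable P space01" "\<tau> \<in> measurable N space01"
    using \<tau> measurable_cong_sets[OF sets_P refl] measurable_cong_sets[OF sets_N refl] by auto
  from integral_distr[OF this(1) f] integral_distr[OF this(2) f] show ?thesis
    unfolding push_def sint_def by simp
qed

text \<open>The defining property of the strong norm, rescaled: if F is C^1 with derivative f and
  stays within s of some constant, then the integral of f is at most s K.\<close>

lemma sint_le_oscillation:
  assumes C: "C1_01 F f" and B: "\<forall>x\<in>{0..1}. \<bar>F x - c\<bar> \<le> s"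
  shows "sint (P, N) f \<le> s * K"
proof -
  have s0: "0 \<le> s" using B by force
  have scaled: "sint (P, N) f \<le> t * K" if t: "t > s" for t
  proof -
    have t0: "t > 0" using t s0 by simp
    have "C1_01 (\<lambda>x. (F x - c) / t) (\<lambda>x. f x / t)"
      using C t0 unfolding C1_01_def by (auto intro!: derivative_eq_intros continuous_intros)
    moreover have "\<forall>x\<in>{0..1}. \<bar>(F x - c) / t\<bar> \<le> 1"
      using B t t0 by (auto simp: abs_divide divide_le_eq_1)
    ultimately have "ereal (sint (P, N) (\<lambda>x. f x / t)) \<le> strong_norm (P, N)"
      unfolding strong_norm_def strong_norm_fun_def by (intro Sup_upper) blast
    then have "sint (P, N) f / t \<le> K"
      using strong_norm_PN by (simp add: sint_def diff_divide_distrib)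
    then show ?thesis using t0 by (simp add: divide_le_eq mult.commute)
  qed
  show ?thesis
  proof (cases "K = 0")
    case True
    then show ?thesis using scaled[of "s + 1"] by simp
  next
    case False
    then have K0: "K > 0" using K_nonneg by simp
    have "sint (P, N) f / K \<le> s"
      by (rule dense_ge) (use scaled K0 in \<open>auto simp: divide_le_eq\<close>)
    then show ?thesis using K0 by (simp add: divide_le_eq)
  qed
qed

lemma abs_sint_le_oscillation:
  assumes C: "C1_01 F f" and B: "\<forall>x\<in>{0..1}. \<bar>F x - c\<bar> \<le> s"
  shows "\<bar>sint (P, N) f\<bar> \<le> s * K"
proof -
  have "C1_01 (\<lambda>x. - F x) (\<lambda>x. - f x)"
    using C unfolding C1_01_def by (auto intro!: derivative_eq_intros continuous_intros)
  moreover have "\<forall>x\<in>{0..1}. \<bar>- F x - (- c)\<bar> \<le> s" using B by auto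
  ultimately have "sint (P, N) (\<lambda>x. - f x) \<le> s * K" by (rule sint_le_oscillation)
  then have "- sint (P, N) f \<le> s * K" by (simp add: sint_def)
  with sint_le_oscillation[OF C B] show ?thesis by linarith
qed

text \<open>Density bound, step 1: continuous integrands.  The primitive of f has oscillation at
  most the L^1 norm of f, hence stays within half of it from its centre.\<close>

lemma sint_continuous_bound:
  assumes f: "continuous_on {0..1} f"
  shows "\<bar>sint (P, N) f\<bar> \<le> K/2 * integral\<^sup>L leb01 (\<lambda>x. \<bar>f x\<bar>)"
proof -
  define F where "F u = integral {0..u} f" for u
  define L where "L = integral {0..1} (\<lambda>x. \<bar>f x\<bar>)"
  have fa: "continuous_on {0..1} (\<lambda>x. \<bar>f x\<bar>)" using f by (intro continuous_intros)
  have C: "C1_01 F f" unfolding C1_01_def F_def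
    using integral_has_vector_derivative[OF f] f
    by (auto simp: has_real_derivative_iff_has_vector_derivative)
  have osc: "\<bar>F y - F x\<bar> \<le> L" if "0 \<le> x" "x \<le> y" "y \<le> 1" for x y
  proof -
    have "f integrable_on {0..y}" using f that
      by (intro integrable_continuous_interval) (auto intro: continuous_on_subset)
    then have "F y = F x + integral {x..y} f"
      unfolding F_def using Henstock_Kurzweil_Integration.integral_combine[OF that(1,2)] by fastforce
    moreover have "norm (integral {x..y} f) \<le> integral {x..y} (\<lambda>x. \<bar>f x\<bar>)"
      by (rule Henstock_Kurzweil_Integration.integral_norm_bound_integral)
        (use f fa that in \<open>auto intro!: integrable_continuous_interval elim!: continuous_on_subset\<close>)
    moreover have "integral {x..y} (\<lambda>x. \<bar>f x\<bar>) \<le> L"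
      unfolding L_def using fa that
      by (intro integral_subset_le integrable_continuous_interval) (auto intro: continuous_on_subset)
    ultimately show ?thesis by simp
  qed
  have "\<forall>x\<in>{0..1}. \<forall>y\<in>{0..1}. \<bar>F x - F y\<bar> \<le> L"
  proof (intro ballI)
    fix x y :: real assume "x \<in> {0..1}" "y \<in> {0..1}"
    then show "\<bar>F x - F y\<bar> \<le> L" using osc[of x y] osc[of y x] by (cases "x \<le> y") auto
  qed
  then obtain c where "\<forall>x\<in>{0..1}. \<bar>F x - c\<bar> \<le> L/2"
    using oscillation_centre[of "{0..1::real}" F L] by auto
  from abs_sint_le_oscillation[OF C this] have "\<bar>sint (P, N) f\<bar> \<le> K/2 * L"
    by (simp add: mult.commute)
  moreover have "integral\<^sup>L leb01 (\<lambda>x. \<bar>f x\<bar>) = L"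
    unfolding L_def integral_leb01
    by (rule set_borel_integral_eq_integral(2)[OF borel_integrable_atLeastAtMost'[OF fa]])
  ultimately show ?thesis by simp
qed

text \<open>Density bound, step 2: open sets, by approximating their indicators with continuous
  functions and passing to the limit under P, N and Lebesgue measure.\<close>

lemma measure_diff_open_bound:
  assumes U: "open U"
  shows "\<bar>measure P (U \<inter> {0..1}) - measure N (U \<inter> {0..1})\<bar> \<le> K/2 * measure leb01 (U \<inter> {0..1})"
proof -
  define V where "V = U \<inter> {-1<..<2}"
  have "open V" "V \<noteq> UNIV" unfolding V_def using U by auto
  then obtain f :: "nat \<Rightarrow> real \<Rightarrow> real" where f_cont: "\<And>k. continuous_on UNIV (f k)"
    and f_range: "\<And>k x. 0 \<le> f k x \<and> f k x \<le> 1" and f_lim: "\<And>x. (\<lambda>k. f k x) \<longlonglongrightarrow> indicator V x"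
    using open_indicator_approx by blast
  have f_meas: "f k \<in> borel_measurable space01" for k
    by (intro borel_measurable_space01I borel_measurable_continuous_onI f_cont)
  have UV: "(indicator V x :: real) = indicator (U \<inter> {0..1}) x" if "x \<in> {0..1}" for x :: real
    using that unfolding V_def indicator_def by auto
  have U01: "U \<inter> {0..1} \<in> sets space01" using U by (simp add: sets_space01_iff borel_open)
  have lim: "(\<lambda>k. integral\<^sup>L M (f k)) \<longlonglongrightarrow> measure M (U \<inter> {0..1})"
    if M: "finite_measure M" "sets M = sets space01" for M
  proof -
    have meas: "f k \<in> borel_measurable M" "indicator (U \<inter> {0..1}) \<in> borel_measurable M" for k
      using f_meas U01 by (simp_all add: measurable_cong_sets[OF M(2) refl])
    have "(\<lambda>k. f k x) \<longlonglongrightarrow> indicator (U \<inter> {0..1}) x" if "x \<in> space M" for x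
      using f_lim[of x] UV[of x] that space_eq_space01[OF M(2)] by simp
    then have "(\<lambda>k. integral\<^sup>L M (f k)) \<longlonglongrightarrow> integral\<^sup>L M (indicator (U \<inter> {0..1}))"
      using f_range by (intro finite_measure_bounded_convergence[OF M(1) meas, where C=1] AE_I2) auto
    then show ?thesis using space_eq_space01[OF M(2)] by (simp add: Int_absorb2)
  qed
  have "(\<lambda>k. \<bar>sint (P, N) (f k)\<bar>) \<longlonglongrightarrow> \<bar>measure P (U \<inter> {0..1}) - measure N (U \<inter> {0..1})\<bar>"
    unfolding sint_def fst_conv snd_conv
    by (intro tendsto_rabs tendsto_diff lim finite_P finite_N sets_P sets_N)
  moreover have "(\<lambda>k. K/2 * integral\<^sup>L leb01 (\<lambda>x. \<bar>f k x\<bar>)) \<longlonglongrightarrow> K/2 * measure leb01 (U \<inter> {0..1})"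
  proof -
    have "(\<lambda>x. \<bar>f k x\<bar>) = f k" for k using f_range by (simp add: abs_of_nonneg)
    then show ?thesis by (simp only:) (intro tendsto_mult_left lim finite_measure_leb01 sets_leb01)
  qed
  moreover have "\<bar>sint (P, N) (f k)\<bar> \<le> K/2 * integral\<^sup>L leb01 (\<lambda>x. \<bar>f k x\<bar>)" for k
    using f_cont by (intro sint_continuous_bound) (auto intro: continuous_on_subset)
  ultimately show ?thesis by (intro LIMSEQ_le) auto
qed

text \<open>Density bound, step 3: Borel sets, by outer regularity of P, N and Lebesgue measure
  (one open set works for all three).\<close>

lemma measure_diff_bound:
  assumes B: "B \<in> sets space01"
  shows "\<bar>measure P B - measure N B\<bar> \<le> K/2 * measure leb01 B"
proof (rule field_le_epsilon)
  fix e :: real assume e: "e > 0"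
  define d where "d = e / (K/2 + 2)"
  have d: "d > 0" unfolding d_def using e K_nonneg by simp
  have "K/2 * d + d \<le> (K/2 + 2) * d" using d by (simp add: algebra_simps)
  also have "\<dots> = e" unfolding d_def using K_nonneg by simp
  finally have de: "K/2 * d + d \<le> e" .
  have "\<exists>U. open U \<and> B \<subseteq> U \<and> measure M (U \<inter> {0..1}) \<le> measure M B + d"
    if "finite_measure M" "sets M = sets space01" for M
    using outer_regular_space01[OF that B d] .
  then obtain U1 U2 U3 where U: "open U1" "open U2" "open U3" "B \<subseteq> U1" "B \<subseteq> U2" "B \<subseteq> U3"
    and approx: "measure P (U1 \<inter> {0..1}) \<le> measure P B + d"
      "measure N (U2 \<inter> {0..1}) \<le> measure N B + d" "measure leb01 (U3 \<inter> {0..1}) \<le> measure leb01 B + d"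
    using finite_P sets_P finite_N sets_N finite_measure_leb01 sets_leb01 by metis
  define V where "V = U1 \<inter> U2 \<inter> U3"
  have B01: "B \<subseteq> {0..1}" using B sets_space01_iff by auto
  have sandwich: "measure M B \<le> measure M (V \<inter> {0..1}) \<and> measure M (V \<inter> {0..1}) \<le> measure M (W \<inter> {0..1})"
    if "finite_measure M" "sets M = sets space01" "W \<in> {U1, U2, U3}" for M W
  proof -
    have "V \<inter> {0..1} \<in> sets M" "W \<inter> {0..1} \<in> sets M" "B \<subseteq> V \<inter> {0..1}" "V \<inter> {0..1} \<subseteq> W \<inter> {0..1}"
      using that(2,3) U B01 unfolding V_def by (auto simp: sets_space01_iff borel_open)
    then show ?thesis by (auto intro!: finite_measure.finite_measure_mono[OF that(1)])
  qed
  have open_bd: "\<bar>measure P (V \<inter> {0..1}) - measure N (V \<inter> {0..1})\<bar> \<le> K/2 * measure leb01 (V \<inter> {0..1})"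
    using U unfolding V_def by (intro measure_diff_open_bound) auto
  have "K/2 * measure leb01 (V \<inter> {0..1}) \<le> K/2 * (measure leb01 B + d)"
    using sandwich[OF finite_measure_leb01 sets_leb01, of U3] approx(3) K_nonneg
    by (intro mult_left_mono) auto
  then have leb_bd: "K/2 * measure leb01 (V \<inter> {0..1}) \<le> K/2 * measure leb01 B + K/2 * d"
    by (simp add: distrib_left)
  have "measure P B - measure N B \<le> K/2 * measure leb01 B + e"
    "- (measure P B - measure N B) \<le> K/2 * measure leb01 B + e"
    using open_bd[unfolded abs_le_iff] leb_bd approx de
      sandwich[OF finite_P sets_P, of U1] sandwich[OF finite_N sets_N, of U2] by auto
  then show "\<bar>measure P B - measure N B\<bar> \<le> K/2 * measure leb01 B + e" by (rule abs_leI)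
qed

lemma sint_step_bound:
  fixes c :: "'j \<Rightarrow> real"
  assumes J: "finite J" and E: "\<And>j. j \<in> J \<Longrightarrow> E j \<in> sets space01" and disj: "disjoint_family_on E J"
    and g: "\<And>x. x \<in> {0..1} \<Longrightarrow> g x = (\<Sum>j\<in>J. c j * indicator (E j) x)"
  shows "\<bar>sint (P, N) g\<bar> \<le> K/2 * integral\<^sup>L leb01 (\<lambda>x. \<bar>g x\<bar>)"
proof -
  have step_int: "integral\<^sup>L M h = (\<Sum>j\<in>J. d j * measure M (E j))"
    if M: "finite_measure M" "sets M = sets space01"
      and h: "\<And>x. x \<in> {0..1} \<Longrightarrow> h x = (\<Sum>j\<in>J. d j * indicator (E j) x)" for M h and d :: "'j \<Rightarrow> real"
    using E h space_eq_space01[OF M(2)] M(2) finite_measure.emeasure_finite[OF M(1)]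
    by (intro integral_step_function[OF J]) (auto simp: less_top)
  have abs_g: "\<bar>g x\<bar> = (\<Sum>j\<in>J. \<bar>c j\<bar> * indicator (E j) x)" if "x \<in> {0..1}" for x
    using g[OF that] abs_sum_disjoint_indicator[OF J disj] by simp
  have "\<bar>sint (P, N) g\<bar> = \<bar>\<Sum>j\<in>J. c j * (measure P (E j) - measure N (E j))\<bar>"
    unfolding sint_def fst_conv snd_conv
    using step_int[OF finite_P sets_P g] step_int[OF finite_N sets_N g]
    by (simp add: sum_subtractf right_diff_distrib)
  also have "\<dots> \<le> (\<Sum>j\<in>J. \<bar>c j\<bar> * \<bar>measure P (E j) - measure N (E j)\<bar>)"
    by (rule order_trans[OF sum_abs]) (simp add: abs_mult)
  also have "\<dots> \<le> (\<Sum>j\<in>J. \<bar>c j\<bar> * (K/2 * measure leb01 (E j)))"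
    using measure_diff_bound[OF E] by (intro sum_mono mult_left_mono) auto
  also have "\<dots> = K/2 * integral\<^sup>L leb01 (\<lambda>x. \<bar>g x\<bar>)"
    using step_int[OF finite_measure_leb01 sets_leb01 abs_g]
    by (simp add: sum_distrib_left mult_ac)
  finally show ?thesis .
qed

text \<open>Quantizing f to the grid
  (1/q)Z gives a step function; the quantization error is at most 1/q under each of the
  three measures, and q is arbitrary.\<close>

lemma sint_quantization_bound:
  assumes f: "f \<in> borel_measurable space01" and fb: "\<And>x. x \<in> {0..1} \<Longrightarrow> \<bar>f x\<bar> \<le> B" and q: "q \<ge> 1"
  shows "\<bar>sint (P, N) (\<lambda>x. \<lfloor>q * f x\<rfloor> / q)\<bar> \<le> K/2 * integral\<^sup>L leb01 (\<lambda>x. \<bar>\<lfloor>q * f x\<rfloor> / q\<bar>)"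
proof (rule sint_step_bound)
  define E where "E j = {x \<in> {0..1}. \<lfloor>q * f x\<rfloor> = j}" for j
  define J where "J = {\<lfloor>- (q * B)\<rfloor>..\<lfloor>q * B\<rfloor>}"
  show "finite J" unfolding J_def by simp
  have "(\<lambda>x. \<lfloor>q * f x\<rfloor>) \<in> measurable space01 (count_space UNIV)"
    using f by measurable
  moreover have "E j = (\<lambda>x. \<lfloor>q * f x\<rfloor>) -` {j} \<inter> space space01" for j
    unfolding E_def by auto
  ultimately show "E j \<in> sets space01" for j by (metis measurable_sets sets_UNIV UNIV_I)
  show "disjoint_family_on E J" unfolding E_def disjoint_family_on_def by auto
  show "\<lfloor>q * f x\<rfloor> / q = (\<Sum>j\<in>J. of_int j / q * indicator (E j) x)" if x: "x \<in> {0..1}" for x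
  proof -
    have "- (q * B) \<le> q * f x" "q * f x \<le> q * B"
      using fb[OF x] q mult_left_mono[of "f x" B q] mult_left_mono[of "- f x" B q]
      by (auto simp: abs_le_iff)
    then have "\<lfloor>q * f x\<rfloor> \<in> J" unfolding J_def by (auto intro: floor_mono)
    moreover have "(\<Sum>j\<in>J. of_int j / q * indicator (E j) x)
        = (\<Sum>j\<in>J. if j = \<lfloor>q * f x\<rfloor> then of_int j / q else 0)"
      using x by (intro sum.cong) (auto simp: E_def)
    ultimately show ?thesis using \<open>finite J\<close> by simp
  qed
qed

lemma sint_close:
  assumes f: "f \<in> borel_measurable space01" and g: "g \<in> borel_measurable space01"
    and bdd: "\<And>x. x \<in> {0..1} \<Longrightarrow> \<bar>f x\<bar> \<le> B" "\<And>x. x \<in> {0..1} \<Longrightarrow> \<bar>g x\<bar> \<le> B"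
    and close: "\<And>x. x \<in> {0..1} \<Longrightarrow> \<bar>f x - g x\<bar> \<le> e"
  shows "\<bar>sint (P, N) f - sint (P, N) g\<bar> \<le> e * (measure P {0..1} + measure N {0..1})"
proof -
  have "\<bar>integral\<^sup>L M f - integral\<^sup>L M g\<bar> \<le> e * measure M {0..1}"
    if M: "finite_measure M" "sets M = sets space01" for M
  proof -
    have "f \<in> borel_measurable M" "g \<in> borel_measurable M"
      using f g by (simp_all add: measurable_cong_sets[OF M(2) refl])
    from integral_close[OF M(1) this, of B e] show ?thesis
      using bdd close space_eq_space01[OF M(2)] by auto
  qed
  from this[OF finite_P sets_P] this[OF finite_N sets_N] show ?thesis
    unfolding sint_def by (simp add: abs_le_iff algebra_simps)
qed

lemma sint_bounded_bound:
  assumes f: "f \<in> borel_measurable space01" and fb: "\<And>x. x \<in> {0..1} \<Longrightarrow> \<bar>f x\<bar> \<le> B"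
  shows "\<bar>sint (P, N) f\<bar> \<le> K/2 * integral\<^sup>L leb01 (\<lambda>x. \<bar>f x\<bar>)"
proof (rule field_le_epsilon)
  fix e :: real assume e: "e > 0"
  define C where "C = K/2 + measure P {0..1} + measure N {0..1}"
  define q where "q = max 1 (C / e)"
  define g where "g x = \<lfloor>q * f x\<rfloor> / q" for x
  have q: "q \<ge> 1" "C / q \<le> e"
    using e K_nonneg unfolding q_def C_def by (auto simp: divide_le_eq max_def mult.commute)
  have close: "\<bar>f x - g x\<bar> \<le> 1/q" for x
    unfolding g_def by (rule floor_quantization_error[OF q(1)])
  have g_meas: "g \<in> borel_measurable space01" unfolding g_def using f by measurable
  have "1/q \<le> 1" using q(1) by simp
  then have bdd: "\<bar>g x\<bar> \<le> B + 1" "\<bar>f x\<bar> \<le> B + 1" if "x \<in> {0..1}" for x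
    using fb[OF that] close[of x] by (simp_all add: abs_le_iff)
  have "\<bar>\<bar>g x\<bar> - \<bar>f x\<bar>\<bar> \<le> 1/q" for x
    using close[of x] abs_triangle_ineq3[of "g x" "f x"] by (simp add: abs_minus_commute)
  then have "\<bar>integral\<^sup>L leb01 (\<lambda>x. \<bar>g x\<bar>) - integral\<^sup>L leb01 (\<lambda>x. \<bar>f x\<bar>)\<bar> \<le> 1/q * measure leb01 {0..1}"
    using f g_meas bdd
    by (intro integral_close[OF finite_measure_leb01, where B="B + 1", simplified])
      (simp_all add: measurable_cong_sets[OF sets_leb01 refl])
  then have leb_g: "K/2 * integral\<^sup>L leb01 (\<lambda>x. \<bar>g x\<bar>) \<le> K/2 * (integral\<^sup>L leb01 (\<lambda>x. \<bar>f x\<bar>) + 1/q)"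
    using K_nonneg by (intro mult_left_mono) (auto simp: measure_leb01)
  have "\<bar>sint (P, N) f\<bar> \<le> \<bar>sint (P, N) g\<bar> + 1/q * (measure P {0..1} + measure N {0..1})"
    using sint_close[OF f g_meas, of "B + 1" "1/q"] bdd close by force
  also have "\<dots> \<le> K/2 * (integral\<^sup>L leb01 (\<lambda>x. \<bar>f x\<bar>) + 1/q) + 1/q * (measure P {0..1} + measure N {0..1})"
    using sint_quantization_bound[OF f fb q(1), folded g_def] leb_g by simp
  also have "\<dots> = K/2 * integral\<^sup>L leb01 (\<lambda>x. \<bar>f x\<bar>) + C / q"
    using q(1) unfolding C_def by (simp add: field_simps)
  finally show "\<bar>sint (P, N) f\<bar> \<le> K/2 * integral\<^sup>L leb01 (\<lambda>x. \<bar>f x\<bar>) + e"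
    using q(2) by linarith
qed

end

locale interval_map =
  fixes n :: nat and a a' \<alpha> c :: "nat \<Rightarrow> real" and \<tau> :: "real \<Rightarrow> real"
  assumes n: "n \<ge> 1"
    and a0: "0 \<le> a 1"
    and aa': "\<forall>i\<in>{1..n}. a i < a' i"
    and a'a: "\<forall>i\<in>{1..<n}. a' i \<le> a (Suc i)"
    and a1: "a' n \<le> 1"
    and alpha_pos: "\<forall>i\<in>{1..n}. \<alpha> i > 0"
    and tau_A: "\<forall>x\<in>{0..1}. x \<in> (\<Union>i\<in>{1..n}. {a i..a' i}) \<longrightarrow>
                   (\<exists>i\<in>{1..n}. x \<in> {a i..a' i} \<and> \<tau> x = \<alpha> i * x + c i)"
    and tau_id: "\<forall>x\<in>{0..1}. x \<notin> (\<Union>i\<in>{1..n}. {a i..a' i}) \<longrightarrow> \<tau> x = x"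
    and inv: "\<forall>i\<in>{1..n}. \<forall>x\<in>{a i..a' i}. \<alpha> i * x + c i \<in> {a i..a' i}"
begin

abbreviation support :: "real set" where
  "support \<equiv> \<Union>i\<in>{1..n}. {a i..a' i}"

lemma intervals_ordered:
  assumes "i \<in> {1..n}" "j \<in> {1..n}" "i < j"
  shows "a' i \<le> a j"
proof -
  have "a' i \<le> a (i + Suc d)" if "1 \<le> i" "i + Suc d \<le> n" for d
    using that
  proof (induction d)
    case 0 then show ?case using a'a by auto
  next
    case (Suc d)
    then have "a' i \<le> a (i + Suc d)" by simp
    also have "a (i + Suc d) < a' (i + Suc d)" using aa' Suc.prems by auto
    also have "a' (i + Suc d) \<le> a (Suc (i + Suc d))" using a'a Suc.prems by auto
    finally show ?case by simp
  qed
  from this[of "j - i - 1"] show ?thesis using assms by auto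
qed

lemma interval_bounds:
  assumes i: "i \<in> {1..n}"
  shows "0 \<le> a i" "a i < a' i" "a' i \<le> 1"
proof -
  have "a 1 \<le> a i"
  proof (cases "i = 1")
    case False
    then have "a 1 < a' 1" "a' 1 \<le> a i" using aa' n intervals_ordered[of 1 i] i by auto
    then show ?thesis by simp
  qed simp
  moreover have "a' i \<le> a' n"
  proof (cases "i = n")
    case False
    then have "a' i \<le> a n" "a n < a' n" using aa' n intervals_ordered[of i n] i by auto
    then show ?thesis by simp
  qed simp
  ultimately show "0 \<le> a i" "a i < a' i" "a' i \<le> 1" using a0 a1 aa' i by auto
qed

lemma support_subset: "support \<subseteq> {0..1}"
proof (rule subsetI)
  fix x assume "x \<in> support"
  then obtain i where i: "i \<in> {1..n}" and x: "x \<in> {a i..a' i}" by (rule UN_E)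
  have "0 \<le> a i" "a' i \<le> 1" using interval_bounds[OF i] by simp_all
  then show "x \<in> {0..1}" using x by simp
qed

lemma interval_unique:
  assumes "i \<in> {1..n}" "j \<in> {1..n}" "u \<in> {a i<..<a' i}" "u \<in> {a j..a' j}"
  shows "j = i"
proof (rule ccontr)
  assume "j \<noteq> i"
  then consider "j < i" | "i < j" by linarith
  then show False
    using intervals_ordered[of j i] intervals_ordered[of i j] assms by cases auto
qed

lemma sum_single_interval:
  fixes h :: "nat \<Rightarrow> real"
  assumes "i \<in> {1..n}" "u \<in> {a i<..<a' i}"
  shows "(\<Sum>j\<in>{1..n}. indicator {a j<..<a' j} u * h j) = h i"
proof -
  have "indicator {a j<..<a' j} u * h j = (if j = i then h i else 0)" if j: "j \<in> {1..n}" for j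
  proof (cases "j = i")
    case False
    then have "u \<notin> {a j<..<a' j}" using interval_unique[OF assms(1) j assms(2)] by auto
    then show ?thesis using False by simp
  qed (use assms in simp)
  then have "(\<Sum>j\<in>{1..n}. indicator {a j<..<a' j} u * h j) = (\<Sum>j\<in>{1..n}. if j = i then h i else 0)"
    by (intro sum.cong) auto
  then show ?thesis using assms(1) by simp
qed

lemma tau_into:
  assumes x: "x \<in> {0..1}"
  shows "\<tau> x \<in> {0..1}"
proof (cases "x \<in> support")
  case True
  then obtain i where i: "i \<in> {1..n}" "x \<in> {a i..a' i}" "\<tau> x = \<alpha> i * x + c i"
    using tau_A x by blast
  then have "\<tau> x \<in> {a i..a' i}" using inv by auto
  then show ?thesis using interval_bounds[OF i(1)] by auto
next
  case False
  then show ?thesis using tau_id x by auto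
qed

lemma tau_affine:
  assumes i: "i \<in> {1..n}" and u: "u \<in> {a i<..<a' i}"
  shows "\<tau> u = \<alpha> i * u + c i"
proof -
  have u01: "u \<in> {0..1}" using interval_bounds[OF i] u by simp
  have "u \<in> {a i..a' i}" using u by simp
  then have "u \<in> support" by (rule UN_I[OF i])
  then obtain j where j: "j \<in> {1..n}" "u \<in> {a j..a' j}" "\<tau> u = \<alpha> j * u + c j"
    using mp[OF bspec[OF tau_A u01]] by blast
  with interval_unique[OF i j(1) u j(2)] show ?thesis by simp
qed

text \<open>The finitely many break points, where tau need not be locally affine.\<close>

definition breaks :: "real set" where
  "breaks = {0, 1} \<union> a ` {1..n} \<union> a' ` {1..n}"

lemma finite_breaks: "finite breaks"
  unfolding breaks_def by auto

lemma breaks_subset: "breaks \<subseteq> {0..1}"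
proof -
  have "a i \<in> {0..1}" "a' i \<in> {0..1}" if "i \<in> {1..n}" for i
    using interval_bounds[OF that] by auto
  then show ?thesis unfolding breaks_def by auto
qed

lemma tau_outside:
  assumes "u \<in> {0..1}" "u \<notin> breaks" "\<forall>i\<in>{1..n}. u \<notin> {a i<..<a' i}"
  shows "\<tau> u = u"
proof -
  have "u \<notin> {a i..a' i}" if i: "i \<in> {1..n}" for i
  proof
    assume "u \<in> {a i..a' i}"
    moreover have "u \<noteq> a i" "u \<noteq> a' i" using assms(2) i unfolding breaks_def by auto
    ultimately have "u \<in> {a i<..<a' i}" by auto
    with assms(3) i show False by blast
  qed
  then have "u \<notin> support" by blast
  then show ?thesis using tau_id assms(1) by auto
qed

text \<open>Off the break points tau agrees with a Borel function; hence tau is measurable.\<close>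

lemma tau_measurable: "\<tau> \<in> measurable space01 space01"
proof -
  define t where "t x = x + (\<Sum>i\<in>{1..n}. indicator {a i<..<a' i} x * ((\<alpha> i - 1) * x + c i))" for x
  have t_eq: "\<tau> u = t u" if "u \<in> {0..1}" "u \<notin> breaks" for u
  proof (cases "\<exists>i\<in>{1..n}. u \<in> {a i<..<a' i}")
    case True
    then obtain i where i: "i \<in> {1..n}" "u \<in> {a i<..<a' i}" by blast
    show ?thesis unfolding t_def sum_single_interval[OF i] tau_affine[OF i] by (simp add: algebra_simps)
  next
    case False
    then have "(\<Sum>i\<in>{1..n}. indicator {a i<..<a' i} u * ((\<alpha> i - 1) * u + c i)) = 0"
      by (intro sum.neutral) auto
    then show ?thesis unfolding t_def using tau_outside[OF that] False by simp
  qed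
  have "t \<in> borel_measurable space01"
    unfolding t_def by (intro borel_measurable_space01I) measurable
  then have "\<tau> \<in> borel_measurable space01"
  proof (rule measurable_discrete_difference[where X=breaks])
    show "countable breaks" using finite_breaks by (rule countable_finite)
    show "{x} \<in> sets space01" if "x \<in> breaks" for x
      using that breaks_subset by (auto simp: sets_space01_iff)
  qed (auto simp: t_eq)
  moreover have "\<tau> \<in> space space01 \<rightarrow> {0..1}" using tau_into by auto
  ultimately show ?thesis unfolding space01_def by (intro measurable_restrict_space2) auto
qed

lemma support_borel: "support \<in> sets borel"
  by auto

lemma support_measure_pos: "measure lborel support > 0"
proof -
  have one: "1 \<in> {1..n}" using n by simp
  have "emeasure lborel support \<le> emeasure lborel {0..1::real}"
    using support_subset support_borel by (intro emeasure_mono) auto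
  then have fin: "support \<in> fmeasurable lborel"
    using support_borel by (auto simp: fmeasurable_def le_less_trans)
  have "measure lborel {a 1..a' 1} \<le> measure lborel support"
    by (rule measure_mono_fmeasurable[OF _ _ fin]) (use UN_upper[OF one, of "\<lambda>i. {a i..a' i}"] in auto)
  moreover have "measure lborel {a 1..a' 1} > 0" using interval_bounds[OF one] by simp
  ultimately show ?thesis by simp
qed

end

lemma deriv_locally_const:
  assumes "open S" "u \<in> S" "\<And>v. v \<in> S \<Longrightarrow> f v = k"
  shows "(f has_real_derivative 0) (at u)"
  by (rule has_field_derivative_transform_within_open[of "\<lambda>_. k" 0 u S]) (use assms in auto)

lemma abs_diff_le_2_bound: "\<bar>x\<bar> \<le> M \<Longrightarrow> \<bar>y\<bar> \<le> M \<Longrightarrow> \<bar>x - y\<bar> \<le> 2 * (M::real)"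
  by arith

context interval_map
begin

text \<open>On [a_i, a'_i] the branch contributes
  (phi(tau x) - phi(tau a_i))/alpha_i - (phi x - phi a_i), replacing phi' by phi' o tau there;
  arguments are clamped so that everything is defined, continuous and constant outside.\<close>

definition clamp01 :: "real \<Rightarrow> real" where
  "clamp01 u = max 0 (min 1 u)"

definition clamp :: "nat \<Rightarrow> real \<Rightarrow> real" where
  "clamp i u = max (a i) (min (a' i) u)"

definition branch :: "nat \<Rightarrow> real \<Rightarrow> real" where
  "branch i u = \<alpha> i * u + c i"

definition corr :: "(real \<Rightarrow> real) \<Rightarrow> nat \<Rightarrow> real \<Rightarrow> real" where
  "corr \<phi> i u = (\<phi> (branch i (clamp i u)) - \<phi> (branch i (a i))) / \<alpha> i - (\<phi> (clamp i u) - \<phi> (a i))"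

definition prim :: "(real \<Rightarrow> real) \<Rightarrow> real \<Rightarrow> real" where
  "prim \<phi> u = \<phi> (clamp01 u) + (\<Sum>i\<in>{1..n}. corr \<phi> i u)"

definition norm_factor :: real where
  "norm_factor = real n + 1 + (\<Sum>i=1..n. 1 / \<alpha> i)"

lemma clamp01_in: "clamp01 u \<in> {0..1}"
  unfolding clamp01_def by auto

lemma clamp_in: "i \<in> {1..n} \<Longrightarrow> clamp i u \<in> {a i..a' i}"
  unfolding clamp_def using interval_bounds[of i] by auto

lemma branch_in: "i \<in> {1..n} \<Longrightarrow> x \<in> {a i..a' i} \<Longrightarrow> branch i x \<in> {a i..a' i}"
  unfolding branch_def using inv by auto

lemma interval_in01: "i \<in> {1..n} \<Longrightarrow> x \<in> {a i..a' i} \<Longrightarrow> x \<in> {0..1}"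
  using interval_bounds[of i] by auto

lemma norm_factor_ge_1: "norm_factor \<ge> 1"
proof -
  have "0 \<le> 1 / \<alpha> i" if "i \<in> {1..n}" for i using bspec[OF alpha_pos that] by simp
  then have "(\<Sum>i=1..n. 1 / \<alpha> i) \<ge> 0" by (rule sum_nonneg)
  then show ?thesis unfolding norm_factor_def by simp
qed

text \<open>Oscillation bound: phi o clamp01 varies by at most 2 and each branch correction by at
  most 2/alpha_i + 2, whence 2 norm_factor in total.\<close>

lemma corr_oscillation:
  assumes b: "\<forall>x\<in>{0..1}. \<bar>\<phi> x\<bar> \<le> 1" and i: "i \<in> {1..n}"
  shows "\<bar>corr \<phi> i x - corr \<phi> i y\<bar> \<le> 2 / \<alpha> i + 2"
proof -
  have al: "\<alpha> i > 0" using alpha_pos i by auto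
  have phi2: "\<bar>\<phi> s - \<phi> t\<bar> \<le> 2" if "s \<in> {a i..a' i}" "t \<in> {a i..a' i}" for s t
    using b interval_in01[OF i that(1)] interval_in01[OF i that(2)] by (intro abs_diff_le_2_bound[where M=1, simplified]) auto
  have eq: "corr \<phi> i x - corr \<phi> i y
      = (\<phi> (branch i (clamp i x)) - \<phi> (branch i (clamp i y))) / \<alpha> i - (\<phi> (clamp i x) - \<phi> (clamp i y))"
    unfolding corr_def using al by (simp add: field_simps)
  have "\<bar>(\<phi> (branch i (clamp i x)) - \<phi> (branch i (clamp i y))) / \<alpha> i\<bar> \<le> 2 / \<alpha> i"
    using phi2[OF branch_in[OF i clamp_in[OF i]] branch_in[OF i clamp_in[OF i]]] al
    by (simp add: abs_divide divide_right_mono)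
  then show ?thesis unfolding eq using phi2[OF clamp_in[OF i] clamp_in[OF i], of x y] by linarith
qed

lemma prim_oscillation:
  assumes b: "\<forall>x\<in>{0..1}. \<bar>\<phi> x\<bar> \<le> 1"
  shows "\<bar>prim \<phi> x - prim \<phi> y\<bar> \<le> 2 * norm_factor"
proof -
  have "prim \<phi> x - prim \<phi> y = (\<phi> (clamp01 x) - \<phi> (clamp01 y)) + (\<Sum>i\<in>{1..n}. corr \<phi> i x - corr \<phi> i y)"
    unfolding prim_def by (simp only: sum_subtractf)
  then have "\<bar>prim \<phi> x - prim \<phi> y\<bar>
      \<le> \<bar>\<phi> (clamp01 x) - \<phi> (clamp01 y)\<bar> + \<bar>\<Sum>i\<in>{1..n}. corr \<phi> i x - corr \<phi> i y\<bar>"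
    by (simp only: abs_triangle_ineq)
  also have "\<dots> \<le> \<bar>\<phi> (clamp01 x) - \<phi> (clamp01 y)\<bar> + (\<Sum>i\<in>{1..n}. \<bar>corr \<phi> i x - corr \<phi> i y\<bar>)"
    by (rule add_left_mono[OF sum_abs])
  also have "\<dots> \<le> 2 + (\<Sum>i\<in>{1..n}. 2 / \<alpha> i + 2)"
  proof (rule add_mono)
    show "\<bar>\<phi> (clamp01 x) - \<phi> (clamp01 y)\<bar> \<le> 2"
      using b clamp01_in[of x] clamp01_in[of y] by (intro abs_diff_le_2_bound[where M=1, simplified]) auto
    show "(\<Sum>i\<in>{1..n}. \<bar>corr \<phi> i x - corr \<phi> i y\<bar>) \<le> (\<Sum>i\<in>{1..n}. 2 / \<alpha> i + 2)"
      by (rule sum_mono) (rule corr_oscillation[OF b])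
  qed
  also have "\<dots> = 2 * norm_factor"
    unfolding norm_factor_def by (simp add: sum.distrib sum_distrib_left algebra_simps)
  finally show ?thesis .
qed

lemma prim_continuous:
  assumes C: "C1_01 \<phi> \<phi>'"
  shows "continuous_on UNIV (prim \<phi>)"
proof -
  have pc: "continuous_on {0..1} \<phi>" by (rule C1_01_continuous[OF C])
  have c1: "continuous_on UNIV (\<lambda>u. \<phi> (clamp01 u))"
    by (rule continuous_on_compose2[OF pc]) (auto simp: clamp01_def clamp01_in intro!: continuous_intros)
  have c2: "continuous_on UNIV (\<lambda>u. corr \<phi> i u)" if i: "i \<in> {1..n}" for i
  proof -
    have cc: "continuous_on UNIV (clamp i)" unfolding clamp_def by (intro continuous_intros)
    have "continuous_on UNIV (\<lambda>u. \<phi> (clamp i u))"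
      by (rule continuous_on_compose2[OF pc cc]) (use interval_in01[OF i clamp_in[OF i]] in auto)
    moreover have "continuous_on UNIV (\<lambda>u. \<phi> (branch i (clamp i u)))"
      by (rule continuous_on_compose2[OF pc])
        (use interval_in01[OF i branch_in[OF i clamp_in[OF i]]] in
          \<open>auto simp: branch_def clamp_def intro!: continuous_intros\<close>)
    moreover have "\<alpha> i \<noteq> 0" using alpha_pos i by fastforce
    ultimately show ?thesis unfolding corr_def by (intro continuous_intros) auto
  qed
  show ?thesis unfolding prim_def by (intro continuous_intros c1 c2) auto
qed

lemma deriv_clamp01:
  assumes C: "C1_01 \<phi> \<phi>'" and u: "u \<noteq> 0" "u \<noteq> 1"
  shows "((\<lambda>v. \<phi> (clamp01 v)) has_real_derivative (if u \<in> {0..1} then \<phi>' u else 0)) (at u)"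
proof -
  consider "u < 0" | "u \<in> {0<..<1}" | "u > 1" using u by force
  then show ?thesis
  proof cases
    case 1
    have "((\<lambda>v. \<phi> (clamp01 v)) has_real_derivative 0) (at u)"
      using 1 by (intro deriv_locally_const[of "{..<0}"]) (auto simp: clamp01_def)
    with 1 show ?thesis by simp
  next
    case 2
    have "((\<lambda>v. \<phi> (clamp01 v)) has_real_derivative \<phi>' u) (at u)"
      by (rule has_field_derivative_transform_within_open[OF C1_01_deriv_interior[OF C 2], where S="{0<..<1}"])
         (use 2 in \<open>auto simp: clamp01_def\<close>)
    then show ?thesis using 2 by simp
  next
    case 3
    have "((\<lambda>v. \<phi> (clamp01 v)) has_real_derivative 0) (at u)"
      using 3 by (intro deriv_locally_const[of "{1<..}"]) (auto simp: clamp01_def)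
    with 3 show ?thesis by simp
  qed
qed

lemma deriv_corr_inside:
  assumes C: "C1_01 \<phi> \<phi>'" and i: "i \<in> {1..n}" and u: "u \<in> {a i<..<a' i}"
  shows "((\<lambda>v. corr \<phi> i v) has_real_derivative \<phi>' (branch i u) - \<phi>' u) (at u)"
proof -
  have al: "\<alpha> i \<noteq> 0" using alpha_pos i by fastforce
  define W where "W = {a i<..<a' i}"
  have W: "open W" "u \<in> W" unfolding W_def using u by auto
  have "(\<phi> has_real_derivative \<phi>' (branch i u)) (at (branch i u) within {0..1})"
    using C interval_in01[OF i branch_in[OF i]] u unfolding C1_01_def by auto
  moreover have "branch i ` W \<subseteq> {0..1}" using interval_in01[OF i branch_in[OF i]] unfolding W_def by auto
  ultimately have "(\<phi> has_real_derivative \<phi>' (branch i u)) (at (branch i u) within branch i ` W)"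
    by (rule DERIV_subset)
  moreover have "(branch i has_real_derivative \<alpha> i) (at u within W)"
    unfolding branch_def by (auto intro!: derivative_eq_intros)
  ultimately have "(\<phi> \<circ> branch i has_real_derivative \<phi>' (branch i u) * \<alpha> i) (at u within W)"
    by (rule DERIV_image_chain)
  then have chain: "((\<lambda>v. \<phi> (branch i v)) has_real_derivative \<phi>' (branch i u) * \<alpha> i) (at u)"
    using at_within_open[OF W(2) W(1)] by (simp add: o_def)
  have "u \<in> {0<..<1}" using u interval_bounds[OF i] by auto
  then have "((\<lambda>v. (\<phi> (branch i v) - \<phi> (branch i (a i))) / \<alpha> i - (\<phi> v - \<phi> (a i)))
      has_real_derivative (\<phi>' (branch i u) * \<alpha> i - 0) / \<alpha> i - (\<phi>' u - 0)) (at u)"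
    by (intro DERIV_diff DERIV_cdivide chain C1_01_deriv_interior[OF C] DERIV_const)
  then have "((\<lambda>v. (\<phi> (branch i v) - \<phi> (branch i (a i))) / \<alpha> i - (\<phi> v - \<phi> (a i)))
      has_real_derivative \<phi>' (branch i u) - \<phi>' u) (at u)"
    using al by simp
  then show ?thesis
    by (rule has_field_derivative_transform_within_open[where S=W]) (use W in \<open>auto simp: corr_def clamp_def W_def\<close>)
qed

lemma deriv_corr:
  assumes C: "C1_01 \<phi> \<phi>'" and i: "i \<in> {1..n}" and u: "u \<noteq> a i" "u \<noteq> a' i"
  shows "((\<lambda>v. corr \<phi> i v) has_real_derivative
           indicator {a i<..<a' i} u * (\<phi>' (branch i u) - \<phi>' u)) (at u)"
proof -
  consider "u < a i" | "u \<in> {a i<..<a' i}" | "u > a' i" using u by force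
  then show ?thesis
  proof cases
    case 1
    have "((\<lambda>v. corr \<phi> i v) has_real_derivative 0) (at u)"
      using 1 by (intro deriv_locally_const[of "{..<a i}"]) (auto simp: corr_def clamp_def)
    with 1 show ?thesis by simp
  next
    case 2
    then show ?thesis using deriv_corr_inside[OF C i 2] by simp
  next
    case 3
    have "((\<lambda>v. corr \<phi> i v) has_real_derivative 0) (at u)"
      using 3 interval_bounds[OF i] by (intro deriv_locally_const[of "{a' i<..}"]) (auto simp: corr_def clamp_def)
    with 3 show ?thesis by simp
  qed
qed

definition pull :: "(real \<Rightarrow> real) \<Rightarrow> real \<Rightarrow> real" where
  "pull \<phi>' u = (if u \<in> {0..1} then \<phi>' (\<tau> u) else 0)"

lemma prim_deriv:
  assumes C: "C1_01 \<phi> \<phi>'" and u: "u \<notin> breaks"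
  shows "(prim \<phi> has_real_derivative pull \<phi>' u) (at u)"
proof -
  have "u \<noteq> 0" "u \<noteq> 1" and ua: "\<And>i. i \<in> {1..n} \<Longrightarrow> u \<noteq> a i \<and> u \<noteq> a' i"
    using u unfolding breaks_def by auto
  then have "(prim \<phi> has_real_derivative (if u \<in> {0..1} then \<phi>' u else 0)
      + (\<Sum>i\<in>{1..n}. indicator {a i<..<a' i} u * (\<phi>' (branch i u) - \<phi>' u))) (at u)"
    unfolding prim_def by (intro DERIV_add deriv_clamp01[OF C] DERIV_sum deriv_corr[OF C]) auto
  moreover have "(if u \<in> {0..1} then \<phi>' u else 0)
      + (\<Sum>i\<in>{1..n}. indicator {a i<..<a' i} u * (\<phi>' (branch i u) - \<phi>' u)) = pull \<phi>' u"
  proof (cases "\<exists>i\<in>{1..n}. u \<in> {a i<..<a' i}")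
    case True
    then obtain i where i: "i \<in> {1..n}" "u \<in> {a i<..<a' i}" by blast
    have "u \<in> {0..1}" using i interval_bounds[OF i(1)] by auto
    then show ?thesis
      unfolding sum_single_interval[OF i] pull_def tau_affine[OF i] branch_def by simp
  next
    case False
    then have "(\<Sum>i\<in>{1..n}. indicator {a i<..<a' i} u * (\<phi>' (branch i u) - \<phi>' u)) = 0"
      by (intro sum.neutral) auto
    moreover have "u \<in> {0..1} \<Longrightarrow> \<tau> u = u" using tau_outside[OF _ u] False by blast
    ultimately show ?thesis unfolding pull_def by simp
  qed
  ultimately show ?thesis by simp
qed

end

context interval_map
begin

text \<open>Smoothing prim phi by averaging over windows [x, x + d]: the average is C^1 on [0,1],
  inherits the oscillation bound, and its derivative is the difference quotient of prim phi,
  which converges to phi' o tau off the break points.\<close>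

definition prim_integral :: "(real \<Rightarrow> real) \<Rightarrow> real \<Rightarrow> real" where
  "prim_integral \<phi> y = integral {-1..y} (prim \<phi>)"

definition window_avg :: "(real \<Rightarrow> real) \<Rightarrow> real \<Rightarrow> real \<Rightarrow> real" where
  "window_avg \<phi> d x = (prim_integral \<phi> (x + d) - prim_integral \<phi> x) / d"

definition window_diff :: "(real \<Rightarrow> real) \<Rightarrow> real \<Rightarrow> real \<Rightarrow> real" where
  "window_diff \<phi> d x = (prim \<phi> (x + d) - prim \<phi> x) / d"

lemma prim_integrable:
  assumes "C1_01 \<phi> \<phi>'"
  shows "prim \<phi> integrable_on {u..v}"
  using continuous_on_subset[OF prim_continuous[OF assms] subset_UNIV]
  by (rule integrable_continuous_interval)

lemma prim_integral_deriv:
  assumes C: "C1_01 \<phi> \<phi>'" and y: "y \<in> {-1<..<3}"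
  shows "(prim_integral \<phi> has_real_derivative prim \<phi> y) (at y)"
proof -
  have "continuous_on {-1..3} (prim \<phi>)" using prim_continuous[OF C] by (rule continuous_on_subset) simp
  then have "((\<lambda>u. integral {-1..u} (prim \<phi>)) has_vector_derivative prim \<phi> y) (at y within {-1..3})"
    by (rule integral_has_vector_derivative) (use y in auto)
  moreover have "at y within {-1..3} = at y" using y by (intro at_within_interior) simp
  ultimately show ?thesis
    unfolding prim_integral_def by (simp add: has_real_derivative_iff_has_vector_derivative)
qed

lemma window_diff_continuous:
  assumes C: "C1_01 \<phi> \<phi>'" and d: "d > 0"
  shows "continuous_on UNIV (window_diff \<phi> d)"
  unfolding window_diff_def using d
  by (intro continuous_intros continuous_on_compose2[OF prim_continuous[OF C]] prim_continuous[OF C]) auto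

lemma window_avg_C1:
  assumes C: "C1_01 \<phi> \<phi>'" and d: "0 < d" "d \<le> 1"
  shows "C1_01 (window_avg \<phi> d) (window_diff \<phi> d)"
  unfolding C1_01_def
proof (intro conjI ballI)
  fix x :: real assume x: "x \<in> {0..1}"
  have "((\<lambda>x. prim_integral \<phi> (x + d)) has_real_derivative prim \<phi> (x + d)) (at x)"
    using prim_integral_deriv[OF C, of "x + d"] x d by (simp add: DERIV_shift)
  moreover have "(prim_integral \<phi> has_real_derivative prim \<phi> x) (at x)"
    using x d by (intro prim_integral_deriv[OF C]) auto
  ultimately have "(window_avg \<phi> d has_real_derivative window_diff \<phi> d x) (at x)"
    unfolding window_avg_def window_diff_def by (intro DERIV_cdivide DERIV_diff)
  then show "(window_avg \<phi> d has_real_derivative window_diff \<phi> d x) (at x within {0..1})"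
    by (rule has_field_derivative_at_within)
next
  show "continuous_on {0..1} (window_diff \<phi> d)"
    using window_diff_continuous[OF C d(1)] by (rule continuous_on_subset) simp
qed

lemma window_avg_centred:
  assumes C: "C1_01 \<phi> \<phi>'" and d: "0 < d" and c0: "\<And>t. \<bar>prim \<phi> t - c0\<bar> \<le> s"
    and x: "x \<in> {0..1}"
  shows "\<bar>window_avg \<phi> d x - c0\<bar> \<le> s"
proof -
  have "prim_integral \<phi> (x + d) = prim_integral \<phi> x + integral {x..x+d} (prim \<phi>)"
    unfolding prim_integral_def
    using Henstock_Kurzweil_Integration.integral_combine[of "-1" x "x + d" "prim \<phi>"] x d prim_integrable[OF C]
    by auto
  moreover have "integral {x..x+d} (\<lambda>t. prim \<phi> t - c0)
      = integral {x..x+d} (prim \<phi>) - integral {x..x+d} (\<lambda>t. c0)"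
    by (rule Henstock_Kurzweil_Integration.integral_diff[OF prim_integrable[OF C]]) auto
  then have "integral {x..x+d} (\<lambda>t. prim \<phi> t - c0) = integral {x..x+d} (prim \<phi>) - d * c0"
    using d by (simp add: content_real)
  ultimately have eq: "window_avg \<phi> d x - c0 = integral {x..x+d} (\<lambda>t. prim \<phi> t - c0) / d"
    unfolding window_avg_def using d by (simp add: field_simps)
  have "norm (integral {x..x+d} (\<lambda>t. prim \<phi> t - c0)) \<le> integral {x..x+d} (\<lambda>_. s)"
    by (rule Henstock_Kurzweil_Integration.integral_norm_bound_integral)
       (use prim_integrable[OF C] c0 in \<open>auto intro!: Henstock_Kurzweil_Integration.integrable_diff\<close>)
  also have "\<dots> = d * s" using d by (simp add: content_real)
  finally show ?thesis unfolding eq using d by (simp add: abs_divide divide_le_eq mult.commute)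
qed

lemma pull_measurable: "C1_01 \<phi> \<phi>' \<Longrightarrow> pull \<phi>' \<in> borel_measurable space01"
proof -
  assume "C1_01 \<phi> \<phi>'"
  then have "(\<lambda>x. \<phi>' (\<tau> x)) \<in> borel_measurable space01"
    using measurable_compose[OF tau_measurable C1_01_deriv_measurable] by blast
  then show ?thesis by (rule measurable_cong[THEN iffD1, rotated]) (simp add: pull_def)
qed

lemma pull_bound: "(\<And>u. u \<in> {0..1} \<Longrightarrow> \<bar>\<phi>' u\<bar> \<le> M) \<Longrightarrow> M \<ge> 0 \<Longrightarrow> \<bar>pull \<phi>' t\<bar> \<le> M"
  unfolding pull_def using tau_into by auto

text \<open>By the fundamental theorem of calculus (prim phi is differentiable off the finite set
  of break points), difference quotients of prim phi are bounded by sup |phi'|.\<close>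

lemma window_diff_bound:
  assumes C: "C1_01 \<phi> \<phi>'" and d: "0 < d" and M: "\<And>u. u \<in> {0..1} \<Longrightarrow> \<bar>\<phi>' u\<bar> \<le> M" "M \<ge> 0"
  shows "\<bar>window_diff \<phi> d x\<bar> \<le> M"
proof -
  have "(pull \<phi>' has_integral (prim \<phi> (x + d) - prim \<phi> x)) {x..x+d}"
  proof (rule fundamental_theorem_of_calculus_interior_strong[OF finite_breaks])
    show "x \<le> x + d" using d by simp
    show "(prim \<phi> has_vector_derivative pull \<phi>' t) (at t)" if "t \<in> {x<..<x+d} - breaks" for t
      using prim_deriv[OF C, of t] that by (simp add: has_real_derivative_iff_has_vector_derivative)
    show "continuous_on {x..x + d} (prim \<phi>)" by (rule continuous_on_subset[OF prim_continuous[OF C]]) simp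
  qed
  then have "pull \<phi>' integrable_on {x..x+d}"
    and integral_eq: "integral {x..x+d} (pull \<phi>') = prim \<phi> (x + d) - prim \<phi> x"
    by auto
  moreover have "\<bar>pull \<phi>' t\<bar> \<le> M" for t
    by (rule pull_bound[OF M])
  ultimately have "norm (integral {x..x+d} (pull \<phi>')) \<le> integral {x..x+d} (\<lambda>_. M)"
    by (intro Henstock_Kurzweil_Integration.integral_norm_bound_integral) auto
  then have "\<bar>prim \<phi> (x + d) - prim \<phi> x\<bar> \<le> d * M"
    using d by (simp add: integral_eq content_real)
  then show ?thesis unfolding window_diff_def using d by (simp add: abs_divide divide_le_eq mult.commute)
qed

lemma window_diff_limit:
  assumes C: "C1_01 \<phi> \<phi>'" and t: "t \<notin> breaks"
  shows "(\<lambda>k. window_diff \<phi> (1 / real (Suc k)) t) \<longlonglongrightarrow> pull \<phi>' t"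
proof -
  have "(\<lambda>h. (prim \<phi> (t + h) - prim \<phi> t) / h) \<midarrow>0\<rightarrow> pull \<phi>' t"
    using prim_deriv[OF C t] by (simp add: DERIV_def)
  moreover have "(\<lambda>k. 1 / real (Suc k)) \<longlonglongrightarrow> 0"
    using LIMSEQ_inverse_real_of_nat by (simp add: divide_inverse)
  moreover have "eventually (\<lambda>k. 1 / real (Suc k) \<noteq> 0) sequentially" by simp
  ultimately show ?thesis unfolding window_diff_def by (rule tendsto_compose_eventually)
qed

text \<open>The difference quotients converge to phi' o tau in L^1 of Lebesgue measure on [0,1]
  (bounded convergence; the break points form a null set).\<close>

lemma window_diff_L1_limit:
  assumes C: "C1_01 \<phi> \<phi>'"
  shows "(\<lambda>k. integral\<^sup>L leb01 (\<lambda>x. \<bar>pull \<phi>' x - window_diff \<phi> (1 / real (Suc k)) x\<bar>)) \<longlonglongrightarrow> 0"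
proof -
  obtain M where M: "M \<ge> 0" "\<And>u. u \<in> {0..1} \<Longrightarrow> \<bar>\<phi>' u\<bar> \<le> M" using C1_01_deriv_bounded[OF C] by blast
  have meas: "(\<lambda>x. \<bar>pull \<phi>' x - window_diff \<phi> (1 / real (Suc k)) x\<bar>) \<in> borel_measurable leb01" for k
    using pull_measurable[OF C] borel_measurable_space01I[OF borel_measurable_continuous_onI[OF window_diff_continuous[OF C, of "1 / real (Suc k)"]]]
    by (simp add: measurable_cong_sets[OF sets_leb01 refl])
  have bound: "\<bar>\<bar>pull \<phi>' x - window_diff \<phi> (1 / real (Suc k)) x\<bar>\<bar> \<le> 2 * M" for k x
    using window_diff_bound[OF C _ M(2,1), of "1 / real (Suc k)" x] pull_bound[of \<phi>' M x, OF M(2,1)] by simp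
  have "AE x in lborel. \<forall>s\<in>breaks. x \<noteq> s"
    by (rule AE_finite_allI[OF finite_breaks]) (rule AE_lborel_singleton)
  then have "AE x in lborel. x \<notin> breaks" by eventually_elim auto
  then have "AE x in leb01. x \<notin> breaks"
    unfolding leb01_def by (subst AE_restrict_space_iff) auto
  then have "AE x in leb01. (\<lambda>k. \<bar>pull \<phi>' x - window_diff \<phi> (1 / real (Suc k)) x\<bar>) \<longlonglongrightarrow> 0"
  proof eventually_elim
    case (elim x)
    have "(\<lambda>k. \<bar>pull \<phi>' x - window_diff \<phi> (1 / real (Suc k)) x\<bar>) \<longlonglongrightarrow> \<bar>pull \<phi>' x - pull \<phi>' x\<bar>"
      using window_diff_limit[OF C elim] by (intro tendsto_intros)
    then show ?case by simp
  qed
  from finite_measure_bounded_convergence[OF finite_measure_leb01 meas _ bound this]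
  show ?thesis by simp
qed

end

locale interval_map_signed = signed01 P N K + interval_map n a a' \<alpha> c \<tau>
  for P N K n a a' \<alpha> c \<tau>
begin

text \<open>Strong estimate for one test function, up to an error: the centred window average of
  prim phi is an admissible test function of size norm_factor, and its derivative differs
  from phi' o tau by an integrand that the density bound controls.\<close>

lemma sint_pull_le_window:
  assumes C: "C1_01 \<phi> \<phi>'" and b: "\<forall>x\<in>{0..1}. \<bar>\<phi> x\<bar> \<le> 1" and d: "0 < d" "d \<le> 1"
  shows "sint (P, N) (pull \<phi>')
    \<le> norm_factor * K + K/2 * integral\<^sup>L leb01 (\<lambda>x. \<bar>pull \<phi>' x - window_diff \<phi> d x\<bar>)"
proof -
  obtain M where M: "M \<ge> 0" "\<And>u. u \<in> {0..1} \<Longrightarrow> \<bar>\<phi>' u\<bar> \<le> M"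
    using C1_01_deriv_bounded[OF C] by blast
  obtain c0 where c0: "\<forall>t\<in>UNIV. \<bar>prim \<phi> t - c0\<bar> \<le> 2 * norm_factor / 2"
    using oscillation_centre[of UNIV "prim \<phi>" "2 * norm_factor"] prim_oscillation[OF b] by blast
  have diff_meas: "window_diff \<phi> d \<in> borel_measurable space01"
    by (intro borel_measurable_space01I borel_measurable_continuous_onI window_diff_continuous[OF C d(1)])
  have bdd: "\<bar>window_diff \<phi> d x\<bar> \<le> M" "\<bar>pull \<phi>' x\<bar> \<le> M" for x
    using window_diff_bound[OF C d(1) M(2,1)] pull_bound[of \<phi>' M x, OF M(2,1)] by auto
  have "sint (P, N) (window_diff \<phi> d) \<le> norm_factor * K"
    using c0 window_avg_centred[OF C d(1)] by (intro sint_le_oscillation[OF window_avg_C1[OF C d], where c=c0]) auto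
  moreover have "sint (P, N) (\<lambda>x. pull \<phi>' x - window_diff \<phi> d x)
      = sint (P, N) (pull \<phi>') - sint (P, N) (window_diff \<phi> d)"
    using bdd by (intro sint_diff[OF pull_measurable[OF C] _ diff_meas, where B=M]) auto
  moreover have "\<bar>sint (P, N) (\<lambda>x. pull \<phi>' x - window_diff \<phi> d x)\<bar>
      \<le> K/2 * integral\<^sup>L leb01 (\<lambda>x. \<bar>pull \<phi>' x - window_diff \<phi> d x\<bar>)"
    using pull_measurable[OF C] diff_meas bdd
    by (intro sint_bounded_bound[where B="2 * M"]) (auto intro: abs_diff_le_2_bound)
  ultimately show ?thesis by linarith
qed

text \<open>Letting the window width tend to 0 removes the error.\<close>

lemma sint_pull_le:
  assumes C: "C1_01 \<phi> \<phi>'" and b: "\<forall>x\<in>{0..1}. \<bar>\<phi> x\<bar> \<le> 1"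
  shows "sint (P, N) (\<lambda>x. \<phi>' (\<tau> x)) \<le> norm_factor * K"
proof -
  define err where
    "err k = integral\<^sup>L leb01 (\<lambda>x. \<bar>pull \<phi>' x - window_diff \<phi> (1 / real (Suc k)) x\<bar>)" for k
  have "err \<longlonglongrightarrow> 0" unfolding err_def by (rule window_diff_L1_limit[OF C])
  then have "(\<lambda>k. norm_factor * K + K/2 * err k) \<longlonglongrightarrow> norm_factor * K + K/2 * 0"
    by (intro tendsto_intros)
  moreover have "sint (P, N) (pull \<phi>') \<le> norm_factor * K + K/2 * err k" for k
    unfolding err_def by (rule sint_pull_le_window[OF C b]) auto
  ultimately have "sint (P, N) (pull \<phi>') \<le> norm_factor * K"
    by (intro tendsto_lowerbound) (auto intro: always_eventually)
  moreover have "sint (P, N) (\<lambda>x. \<phi>' (\<tau> x)) = sint (P, N) (pull \<phi>')"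
    unfolding sint_def pull_def by (intro arg_cong2[where f=minus] Bochner_Integration.integral_cong) auto
  ultimately show ?thesis by simp
qed

text \<open>Weak estimate for one test function: psi - psi o tau is bounded by 2 and vanishes
  outside the support, so the density bound gives K m(support).\<close>

lemma sint_displacement_le:
  assumes \<psi>: "\<psi> \<in> borel_measurable space01" and b: "\<forall>x\<in>{0..1}. \<bar>\<psi> x\<bar> \<le> 1"
  shows "\<bar>sint (P, N) (\<lambda>x. \<psi> x - \<psi> (\<tau> x))\<bar> \<le> K * measure lborel support"
proof -
  define h where "h x = \<psi> x - \<psi> (\<tau> x)" for x
  have h_meas: "h \<in> borel_measurable space01"
    unfolding h_def using \<psi> measurable_compose[OF tau_measurable \<psi>] by simp
  have h_bound: "\<bar>h x\<bar> \<le> 2" if "x \<in> {0..1}" for x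
    unfolding h_def using b that tau_into[OF that] by (intro abs_diff_le_2_bound[where M=1, simplified]) auto
  have h_zero: "h x = 0" if "x \<in> {0..1}" "x \<notin> support" for x
    using tau_id that unfolding h_def by auto
  have support_sets: "support \<in> sets leb01"
    using support_subset support_borel by (simp add: sets_leb01 sets_space01_iff)
  have "integral\<^sup>L leb01 (\<lambda>x. \<bar>h x\<bar>) \<le> integral\<^sup>L leb01 (\<lambda>x. 2 * (indicator support x :: real))"
  proof (rule integral_mono)
    show "integrable leb01 (\<lambda>x. \<bar>h x\<bar>)"
      using h_meas h_bound
      by (auto intro!: finite_measure.integrable_const_bound[OF finite_measure_leb01, where B=2]
          simp: measurable_cong_sets[OF sets_leb01 refl])
    have "emeasure leb01 support < \<infinity>"
      using finite_measure.emeasure_finite[OF finite_measure_leb01, of support] by (simp add: less_top)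
    then show "integrable leb01 (\<lambda>x. 2 * (indicator support x :: real))"
      using support_sets by (intro integrable_mult_right integrable_real_indicator) auto
    show "\<bar>h x\<bar> \<le> 2 * indicator support x" if "x \<in> space leb01" for x
      using that h_bound h_zero by (cases "x \<in> support") auto
  qed
  also have "\<dots> = 2 * measure lborel support"
    using support_subset by (simp add: Int_absorb2 measure_leb01)
  finally have "K/2 * integral\<^sup>L leb01 (\<lambda>x. \<bar>h x\<bar>) \<le> K/2 * (2 * measure lborel support)"
    using K_nonneg by (intro mult_left_mono) auto
  then show ?thesis
    using sint_bounded_bound[OF h_meas h_bound] unfolding h_def by simp
qed

lemma strong_norm_push_le: "strong_norm (push \<tau> (P, N)) \<le> ereal (norm_factor * K)"
  unfolding strong_norm_def strong_norm_fun_def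
proof (rule Sup_least, clarify)
  fix \<phi> \<phi>' assume C: "C1_01 \<phi> \<phi>'" and b: "\<forall>x\<in>{0..1}. \<bar>\<phi> x\<bar> \<le> 1"
  have "sint (push \<tau> (P, N)) \<phi>' = sint (P, N) (\<lambda>x. \<phi>' (\<tau> x))"
    by (rule sint_push[OF tau_measurable C1_01_deriv_measurable[OF C]])
  then show "ereal (sint (push \<tau> (P, N)) \<phi>') \<le> ereal (norm_factor * K)"
    using sint_pull_le[OF C b] by simp
qed

lemma weak_norm_displacement_le:
  "weak_norm_fun (\<lambda>\<psi>. sint (P, N) \<psi> - sint (push \<tau> (P, N)) \<psi>) \<le> ereal (K * measure lborel support)"
  unfolding weak_norm_fun_def
proof (rule Sup_least, clarify)
  fix \<psi> :: "real \<Rightarrow> real" assume \<psi>: "\<psi> \<in> borel_measurable space01" and b: "\<forall>x\<in>{0..1}. \<bar>\<psi> x\<bar> \<le> 1"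
  have "sint (P, N) \<psi> - sint (push \<tau> (P, N)) \<psi> = sint (P, N) (\<lambda>x. \<psi> x - \<psi> (\<tau> x))"
    using sint_push[OF tau_measurable \<psi>] b tau_into
    by (subst sint_diff[OF \<psi> _ measurable_compose[OF tau_measurable \<psi>], where B=1]) auto
  then show "ereal (sint (P, N) \<psi> - sint (push \<tau> (P, N)) \<psi>) \<le> ereal (K * measure lborel support)"
    using sint_displacement_le[OF \<psi> b] by simp
qed

text \<open>The two estimates of the theorem for a measure of finite strong norm; the weak one
  is weakened by the factor (norm_factor + 1)/2 >= 1 to match the statement.\<close>

lemma norm_estimates:
  "strong_norm (push \<tau> (P, N)) \<le> ereal norm_factor * strong_norm (P, N)
   \<and> weak_norm_fun (\<lambda>\<psi>. sint (P, N) \<psi> - sint (push \<tau> (P, N)) \<psi>)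
       \<le> ereal ((norm_factor + 1) / 2 * measure lborel support) * strong_norm (P, N)"
proof
  show "strong_norm (push \<tau> (P, N)) \<le> ereal norm_factor * strong_norm (P, N)"
    using strong_norm_push_le strong_norm_PN by simp
  have "1 * measure lborel support \<le> (norm_factor + 1) / 2 * measure lborel support"
    using norm_factor_ge_1 by (intro mult_right_mono) auto
  then have "K * measure lborel support \<le> K * ((norm_factor + 1) / 2 * measure lborel support)"
    using K_nonneg by (intro mult_left_mono) auto
  then have "K * measure lborel support \<le> (norm_factor + 1) / 2 * measure lborel support * K"
    by (metis mult.commute)
  then show "weak_norm_fun (\<lambda>\<psi>. sint (P, N) \<psi> - sint (push \<tau> (P, N)) \<psi>)
      \<le> ereal ((norm_factor + 1) / 2 * measure lborel support) * strong_norm (P, N)"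
    using order_trans[OF weak_norm_displacement_le] strong_norm_PN by simp
qed

end

context interval_map
begin

lemma norm_estimates_infinite:
  assumes "strong_norm \<mu> = \<infinity>"
  shows "strong_norm (push \<tau> \<mu>) \<le> ereal norm_factor * strong_norm \<mu>
   \<and> weak_norm_fun (\<lambda>\<psi>. sint \<mu> \<psi> - sint (push \<tau> \<mu>) \<psi>)
       \<le> ereal ((norm_factor + 1) / 2 * measure lborel support) * strong_norm \<mu>"
proof -
  have "norm_factor > 0" "(norm_factor + 1) / 2 * measure lborel support > 0"
    using norm_factor_ge_1 support_measure_pos by simp_all
  then show ?thesis using assms support_measure_pos by simp
qed

end

theorem lemma6:
  fixes n :: nat and a a' \<alpha> c :: "nat \<Rightarrow> real" and \<tau> :: "real \<Rightarrow> real"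
    and \<mu> :: "real measure \<times> real measure"
  assumes n: "n \<ge> 1"
    and a0: "0 \<le> a 1"
    and aa': "\<forall>i\<in>{1..n}. a i < a' i"
    and a'a: "\<forall>i\<in>{1..<n}. a' i \<le> a (Suc i)"
    and a1: "a' n \<le> 1"
    and alpha_pos: "\<forall>i\<in>{1..n}. \<alpha> i > 0"
    and tau_A: "\<forall>x\<in>{0..1}. x \<in> (\<Union>i\<in>{1..n}. {a i..a' i}) \<longrightarrow>
                   (\<exists>i\<in>{1..n}. x \<in> {a i..a' i} \<and> \<tau> x = \<alpha> i * x + c i)"
    and tau_id: "\<forall>x\<in>{0..1}. x \<notin> (\<Union>i\<in>{1..n}. {a i..a' i}) \<longrightarrow> \<tau> x = x"
    and inv: "\<forall>i\<in>{1..n}. \<forall>x\<in>{a i..a' i}. \<alpha> i * x + c i \<in> {a i..a' i}"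
    and mu: "signed_meas \<mu>"
  shows "strong_norm (push \<tau> \<mu>) \<le> ereal (real n + 1 + (\<Sum>i=1..n. 1 / \<alpha> i)) * strong_norm \<mu>
       \<and> weak_norm_fun (\<lambda>\<phi>. sint \<mu> \<phi> - sint (push \<tau> \<mu>) \<phi>)
           \<le> ereal ((real n + 2 + (\<Sum>i=1..n. 1 / \<alpha> i)) / 2
                    * measure lborel (\<Union>i\<in>{1..n}. {a i..a' i})) * strong_norm \<mu>"
proof -
  interpret interval_map n a a' \<alpha> c \<tau> by unfold_locales (fact assms)+
  obtain P N where PN: "\<mu> = (P, N)" by (cases \<mu>)
  have factors: "real n + 1 + (\<Sum>i=1..n. 1 / \<alpha> i) = norm_factor"
    "(real n + 2 + (\<Sum>i=1..n. 1 / \<alpha> i)) / 2 = (norm_factor + 1) / 2"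
    unfolding norm_factor_def by simp_all
  consider "strong_norm \<mu> = \<infinity>" | K where "strong_norm \<mu> = ereal K"
    using strong_norm_nonneg[of \<mu>] by (cases "strong_norm \<mu>") auto
  then show ?thesis
  proof cases
    case 1
    show ?thesis unfolding factors by (rule norm_estimates_infinite[OF 1])
  next
    case (2 K)
    have "signed01 P N K"
      using mu 2 unfolding PN signed_meas_def by (intro signed01.intro) auto
    then interpret signed01 P N K .
    interpret interval_map_signed P N K n a a' \<alpha> c \<tau> by intro_locales
    show ?thesis unfolding factors PN by (rule norm_estimates)
  qed
qed

end
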